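(* Let $\Pi$ be a matroid secretary problem on a fixed finite matroid, whose instances are assignments of positive weights to the matroid elements. There is a bijection $B$ between probability distributions with finite support over instances of $\Pi$ such that, for every such $D$ and every $r$, there exists an algorithm with type 2 performance guarantee $r$ on $D$ if and only if there exists an algorithm with type 3 performance guarantee $r$ on $B(D)$.
   Context: In the matroid secretary problem the elements of a matroid arrive in uniformly random order revealing their weights; the algorithm must irrevocably accept or reject each on arrival, keeping the accepted set independent. For an instance $I$, $a(I)$ is the set accepted by algorithm $a$, $opt(I)$ a maximum-weight independent set, and $w(X)$ the total weight of $X$. Algorithm $a$ has type 2 performance guarantee $r$ on a distribution $D$ if $\mathbb{E}_{I\sim D}[w(a(I))/w(opt(I))]\ge r$, and type 3 performance guarantee $r$ on $D$ if $\mathbb{E}_{I\sim D}[w(a(I))]\ge r\cdot\mathbb{E}_{I\sim D}[w(opt(I))]$; the expectations of $w(a(I))$ are also over the random arrival order and the algorithm's randomness. *)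

theory Defs
  imports "HOL-Probability.Probability" "HOL-Combinatorics.Multiset_Permutations"
begin

definition matroid :: "('a::finite set \<Rightarrow> bool) \<Rightarrow> bool" where
  "matroid indep \<longleftrightarrow>
     indep {} \<and>
     (\<forall>A B. indep B \<and> A \<subseteq> B \<longrightarrow> indep A) \<and>
     (\<forall>A B. indep A \<and> indep B \<and> card A < card B \<longrightarrow>
        (\<exists>x\<in>B - A. indep (insert x A)))"

definition instance_w :: "('a::finite \<Rightarrow> real) \<Rightarrow> bool" where
  "instance_w w \<longleftrightarrow> (\<forall>e. w e > 0)"

definition fin_dists :: "('a::finite \<Rightarrow> real) pmf set" where
  "fin_dists = {D. finite (set_pmf D) \<and> (\<forall>w\<in>set_pmf D. instance_w w)}"

text \<open>An (online, possibly randomized) algorithm: given the history of arrived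
  elements (element, revealed weight, whether it was accepted) and the currently
  arriving element with its weight, it returns a distribution over the decision
  (accept = True). An acceptance is only executed if the accepted set stays
  independent, so every run yields an independent set.\<close>
type_synonym 'a algorithm = "('a \<times> real \<times> bool) list \<Rightarrow> 'a \<Rightarrow> real \<Rightarrow> bool pmf"

fun run :: "('a set \<Rightarrow> bool) \<Rightarrow> 'a algorithm \<Rightarrow> ('a \<Rightarrow> real) \<Rightarrow> 'a list
             \<Rightarrow> ('a \<times> real \<times> bool) list \<Rightarrow> 'a set \<Rightarrow> 'a set pmf" where
  "run indep A w [] hist acc = return_pmf acc"
| "run indep A w (x # xs) hist acc =
     bind_pmf (A hist x (w x)) (\<lambda>b.
       let ok = (b \<and> indep (insert x acc)) in
       run indep A w xs (hist @ [(x, w x, ok)]) (if ok then insert x acc else acc))"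

definition alg_out :: "('a::finite set \<Rightarrow> bool) \<Rightarrow> 'a algorithm \<Rightarrow> ('a \<Rightarrow> real) \<Rightarrow> 'a set pmf" where
  "alg_out indep A w =
     bind_pmf (pmf_of_set (permutations_of_set UNIV)) (\<lambda>xs. run indep A w xs [] {})"

definition alg_weight :: "('a::finite set \<Rightarrow> bool) \<Rightarrow> 'a algorithm \<Rightarrow> ('a \<Rightarrow> real) \<Rightarrow> real" where
  "alg_weight indep A w = measure_pmf.expectation (alg_out indep A w) (\<lambda>S. sum w S)"

definition opt_weight :: "('a::finite set \<Rightarrow> bool) \<Rightarrow> ('a \<Rightarrow> real) \<Rightarrow> real" where
  "opt_weight indep w = Max ((\<lambda>S. sum w S) ` {S. indep S})"

definition type2 :: "('a::finite set \<Rightarrow> bool) \<Rightarrow> 'a algorithm \<Rightarrow> ('a \<Rightarrow> real) pmf \<Rightarrow> real \<Rightarrow> bool" where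
  "type2 indep A D r \<longleftrightarrow>
     measure_pmf.expectation D (\<lambda>w. alg_weight indep A w / opt_weight indep w) \<ge> r"

definition type3 :: "('a::finite set \<Rightarrow> bool) \<Rightarrow> 'a algorithm \<Rightarrow> ('a \<Rightarrow> real) pmf \<Rightarrow> real \<Rightarrow> bool" where
  "type3 indep A D r \<longleftrightarrow>
     measure_pmf.expectation D (\<lambda>w. alg_weight indep A w)
       \<ge> r * measure_pmf.expectation D (\<lambda>w. opt_weight indep w)"

end

theory Submission
  imports Defs
begin

text \<open>Reweighting the distribution by the factor 1/w(opt(I)) turns the expected ratio
  E[w(a(I))/w(opt(I))] into E'[w(a(I))] up to the normalising constant c = E[1/w(opt(I))],
  while E'[w(opt(I))] becomes 1/c. Hence both guarantees compare the same quantity with r,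
  after division by the same positive constant. Reweighting by w(opt(I)) undoes the
  transformation, so it is a bijection on finitely supported distributions.\<close>

definition reweight_pmf :: "('b \<Rightarrow> real) \<Rightarrow> 'b pmf \<Rightarrow> 'b pmf" where
  "reweight_pmf g D = embed_pmf (\<lambda>x. pmf D x * g x / measure_pmf.expectation D g)"

lemma expectation_finite_support:
  assumes "finite (set_pmf D)"
  shows "measure_pmf.expectation D f = (\<Sum>x\<in>set_pmf D. pmf D x * f x)"
  using assms by (subst integral_measure_pmf_real[where A = "set_pmf D"]) (auto simp: mult.commute)

lemma expectation_pos_finite_support:
  fixes g :: "'b \<Rightarrow> real"
  assumes "finite (set_pmf D)" "\<forall>x\<in>set_pmf D. g x > 0"
  shows "measure_pmf.expectation D g > 0"
  unfolding expectation_finite_support[OF assms(1)] using assms set_pmf_not_empty[of D]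
  by (intro sum_pos) (auto simp: pmf_positive)

context
  fixes D :: "'b pmf" and g :: "'b \<Rightarrow> real"
  assumes finite_support: "finite (set_pmf D)" and pos: "\<forall>x\<in>set_pmf D. g x > 0"
begin

lemma pmf_reweight_pmf:
  "pmf (reweight_pmf g D) x = pmf D x * g x / measure_pmf.expectation D g"
proof -
  let ?c = "measure_pmf.expectation D g"
  let ?p = "\<lambda>x. pmf D x * g x / ?c"
  have c: "?c > 0"
    using expectation_pos_finite_support finite_support pos .
  have nonneg: "?p x \<ge> 0" for x
    using c pos by (cases "x \<in> set_pmf D") (auto simp: set_pmf_iff less_imp_le)
  have "(\<integral>\<^sup>+x. ennreal (?p x) \<partial>count_space UNIV) = (\<Sum>x\<in>set_pmf D. ennreal (?p x))"
    using finite_support by (intro nn_integral_count_space') (auto simp: set_pmf_iff)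
  also have "\<dots> = ennreal (\<Sum>x\<in>set_pmf D. ?p x)"
    using nonneg by (intro sum_ennreal) auto
  also have "(\<Sum>x\<in>set_pmf D. ?p x) = 1"
    using c finite_support by (simp add: expectation_finite_support sum_divide_distrib[symmetric])
  finally show ?thesis
    unfolding reweight_pmf_def using nonneg by (subst pmf_embed_pmf) auto
qed

lemma set_pmf_reweight_pmf: "set_pmf (reweight_pmf g D) = set_pmf D"
  using expectation_pos_finite_support[OF finite_support pos] pos
  by (auto simp: set_pmf_iff pmf_reweight_pmf)

lemma expectation_reweight_pmf:
  "measure_pmf.expectation (reweight_pmf g D) f
     = measure_pmf.expectation D (\<lambda>x. g x * f x) / measure_pmf.expectation D g"
  using finite_support
  by (simp add: expectation_finite_support set_pmf_reweight_pmf pmf_reweight_pmf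
      sum_divide_distrib algebra_simps)

end

lemma reweight_pmf_inverse:
  fixes g :: "'b \<Rightarrow> real"
  assumes finite_support: "finite (set_pmf D)" and pos: "\<forall>x\<in>set_pmf D. g x > 0"
  shows "reweight_pmf (\<lambda>x. 1 / g x) (reweight_pmf g D) = D"
proof (rule pmf_eqI)
  fix x
  let ?D' = "reweight_pmf g D"
  have finite_support': "finite (set_pmf ?D')" and pos': "\<forall>x\<in>set_pmf ?D'. 1 / g x > 0"
    using finite_support pos by (simp_all add: set_pmf_reweight_pmf)
  have c: "measure_pmf.expectation D g > 0"
    using expectation_pos_finite_support finite_support pos .
  have "measure_pmf.expectation ?D' (\<lambda>x. 1 / g x)
          = measure_pmf.expectation D (\<lambda>x. g x * (1 / g x)) / measure_pmf.expectation D g"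
    by (rule expectation_reweight_pmf[OF finite_support pos])
  also have "measure_pmf.expectation D (\<lambda>x. g x * (1 / g x)) = measure_pmf.expectation D (\<lambda>_. 1)"
    using pos by (intro integral_cong_AE) (auto simp: AE_measure_pmf_iff)
  finally have c': "measure_pmf.expectation ?D' (\<lambda>x. 1 / g x) = 1 / measure_pmf.expectation D g"
    by simp
  show "pmf (reweight_pmf (\<lambda>x. 1 / g x) ?D') x = pmf D x"
  proof (cases "x \<in> set_pmf D")
    case True
    then have "g x > 0"
      using pos by blast
    then show ?thesis
      using c by (simp add: pmf_reweight_pmf[OF finite_support' pos'] pmf_reweight_pmf[OF finite_support pos] c')
  next
    case False
    then show ?thesis
      by (simp add: pmf_reweight_pmf[OF finite_support' pos'] pmf_reweight_pmf[OF finite_support pos] set_pmf_iff)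
  qed
qed

lemma bij_betw_reweight_pmf:
  fixes g :: "'b \<Rightarrow> real"
  assumes "\<forall>x\<in>P. g x > 0"
  shows "bij_betw (reweight_pmf g)
           {D. finite (set_pmf D) \<and> set_pmf D \<subseteq> P} {D. finite (set_pmf D) \<and> set_pmf D \<subseteq> P}"
proof (rule bij_betw_byWitness[where f' = "reweight_pmf (\<lambda>x. 1 / g x)"])
  let ?S = "{D. finite (set_pmf D) \<and> set_pmf D \<subseteq> P}"
  have inv_pos: "\<forall>x\<in>P. 1 / g x > 0"
    using assms by simp
  show "\<forall>D\<in>?S. reweight_pmf (\<lambda>x. 1 / g x) (reweight_pmf g D) = D"
    using reweight_pmf_inverse assms by blast
  show "\<forall>D\<in>?S. reweight_pmf g (reweight_pmf (\<lambda>x. 1 / g x) D) = D"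
    using reweight_pmf_inverse[of _ "\<lambda>x. 1 / g x"] inv_pos by auto
  show "reweight_pmf g ` ?S \<subseteq> ?S"
    using assms by (auto simp: set_pmf_reweight_pmf subset_iff)
  show "reweight_pmf (\<lambda>x. 1 / g x) ` ?S \<subseteq> ?S"
    using inv_pos by (auto simp: set_pmf_reweight_pmf subset_iff)
qed

lemma fin_dists_eq: "fin_dists = {D. finite (set_pmf D) \<and> set_pmf D \<subseteq> Collect instance_w}"
  by (auto simp: fin_dists_def)

lemma opt_weight_pos:
  assumes "instance_w w" "indep {e}"
  shows "opt_weight indep w > 0"
proof -
  have "sum w {e} \<le> opt_weight indep w"
    unfolding opt_weight_def using assms(2) by (intro Max_ge) (auto intro!: rev_image_eqI[of "{e}"])
  moreover have "w e > 0"
    using assms(1) by (simp add: instance_w_def)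
  ultimately show ?thesis by simp
qed

lemma type2_iff_type3_reweight_pmf:
  assumes "D \<in> fin_dists" and "indep {e}"
  shows "type2 indep A D r
           \<longleftrightarrow> type3 indep A (reweight_pmf (\<lambda>w. 1 / opt_weight indep w) D) r"
proof -
  let ?c = "measure_pmf.expectation D (\<lambda>w. 1 / opt_weight indep w)"
  have finite_support: "finite (set_pmf D)" and opt_pos: "\<forall>w\<in>set_pmf D. opt_weight indep w > 0"
    using assms opt_weight_pos by (auto simp: fin_dists_def)
  then have pos: "\<forall>w\<in>set_pmf D. 1 / opt_weight indep w > 0"
    by simp
  have c: "?c > 0"
    using expectation_pos_finite_support finite_support pos .
  have alg: "measure_pmf.expectation (reweight_pmf (\<lambda>w. 1 / opt_weight indep w) D) (alg_weight indep A)
      = measure_pmf.expectation D (\<lambda>w. alg_weight indep A w / opt_weight indep w) / ?c"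
    by (simp add: expectation_reweight_pmf[OF finite_support pos])
  have "measure_pmf.expectation D (\<lambda>w. 1 / opt_weight indep w * opt_weight indep w)
      = measure_pmf.expectation D (\<lambda>_. 1)"
    using opt_pos by (intro integral_cong_AE) (auto simp: AE_measure_pmf_iff)
  then have opt: "measure_pmf.expectation (reweight_pmf (\<lambda>w. 1 / opt_weight indep w) D)
      (opt_weight indep) = 1 / ?c"
    by (simp add: expectation_reweight_pmf[OF finite_support pos])
  show ?thesis
    unfolding type2_def type3_def alg opt using c by (simp add: divide_right_mono divide_le_cancel)
qed

theorem lemma5p9:
  fixes indep :: "'a::finite set \<Rightarrow> bool"
  assumes "matroid indep"
    and "\<exists>e. indep {e}"
  shows "\<exists>B. bij_betw B fin_dists fin_dists \<and>
           (\<forall>D\<in>fin_dists. \<forall>r::real.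
              (\<exists>A. type2 indep A D r) \<longleftrightarrow> (\<exists>A. type3 indep A (B D) r))"
proof -
  obtain e where e: "indep {e}"
    using assms(2) by blast
  let ?B = "reweight_pmf (\<lambda>w. 1 / opt_weight indep w)"
  have "bij_betw ?B fin_dists fin_dists"
    unfolding fin_dists_eq using e by (intro bij_betw_reweight_pmf) (simp add: opt_weight_pos)
  moreover have "\<forall>D\<in>fin_dists. \<forall>r. (\<exists>A. type2 indep A D r) \<longleftrightarrow> (\<exists>A. type3 indep A (?B D) r)"
    using type2_iff_type3_reweight_pmf e by blast
  ultimately show ?thesis
    by blast
qed

end
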